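(* Let $a\geq 3$ and $m\geq 2a^2-a+2$ be integers, and suppose $[C(m,a)]$ is colored with red and blue so that there is no monochromatic solution of $L(m,a)$ in $[C(m,a)]$, with both $a-2$ and $a-1$ red. Then $2$ is red.
   Context: For integers $m\geq 3$, $a\geq 1$, $L(m,a)$ denotes the equation $x_1+x_2+\cdots+x_{m-1}=a x_m$. For a positive integer $n$, $[n]=\{1,\dots,n\}$. A solution of $L(m,a)$ in $[n]$ is an $m$-tuple $(x_1,\dots,x_m)\in[n]^m$ (entries not necessarily distinct) satisfying the equation; given a 2-coloring of $[n]$, it is monochromatic if all $x_i$ have the same color. $C(m,a)$ denotes $\left\lceil \frac{m-1}{a}\left\lceil \frac{m-1}{a}\right\rceil\right\rceil$. *)

theory Defs
  imports Complex_Main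
begin

definition Cma :: "nat \<Rightarrow> nat \<Rightarrow> nat" where
  "Cma m a = nat (ceiling ((of_nat (m - 1) / of_nat a :: real) * of_int (ceiling (of_nat (m - 1) / of_nat a :: real))))"

text \<open>A solution of L(m,a) in [n]: an m-tuple x_1..x_m, indexed here as x 0 .. x (m-1),
  with all entries in {1..n} and x_1+...+x_{m-1} = a x_m.\<close>
definition is_solution :: "nat \<Rightarrow> nat \<Rightarrow> nat \<Rightarrow> (nat \<Rightarrow> nat) \<Rightarrow> bool" where
  "is_solution m a n x \<longleftrightarrow>
     (\<forall>i<m. x i \<in> {1..n}) \<and> (\<Sum>i<m - 1. x i) = a * x (m - 1)"

text \<open>A 2-colouring is a map col :: nat => bool (True = red, False = blue), relevant on [n].
  A solution is monochromatic if all entries have the same colour.\<close>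
definition monochromatic :: "(nat \<Rightarrow> bool) \<Rightarrow> nat \<Rightarrow> (nat \<Rightarrow> nat) \<Rightarrow> bool" where
  "monochromatic col m x \<longleftrightarrow> (\<forall>i<m. \<forall>j<m. col (x i) = col (x j))"

end

theory Submission
  imports Defs
begin

(* Write N = m - 1 = a q + r with 0 <= r < a; then C(m,a) >= q^2.
   All witnesses are "block tuples": x_m = z and x_1..x_{m-1} consist of a block
   of copies of u, then a block of copies of v, then copies of w.
   (1) Every y in [C(m,a)] with N(a-2) <= a y <= N(a-1) is blue: a y is a sum of
       N terms each equal to a-1 or a-2, giving a red solution otherwise.
   (2) For a >= 4 both h = q(a-1) + r - 1 and y = q(a-2) + r + a - 4 lie in
       this range, hence are blue.  If 2 were blue, then
       (a-4) h + 2 y + 2 (N - (a-2)) = a h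
       would be a blue solution.  For a = 3 the claim is just red (a - 1). *)

definition block_tuple :: "nat \<Rightarrow> nat \<Rightarrow> nat \<Rightarrow> nat \<Rightarrow> nat \<Rightarrow> nat \<Rightarrow> nat \<Rightarrow> nat \<Rightarrow> nat" where
  "block_tuple m k1 k2 u v w z =
     (\<lambda>i. if i = m - 1 then z else if i < k1 then u else if i < k2 then v else w)"

lemma sum_three_blocks:
  fixes u v w :: nat
  assumes "k1 \<le> k2" "k2 \<le> N"
  shows "(\<Sum>i<N. if i < k1 then u else if i < k2 then v else w)
           = k1 * u + (k2 - k1) * v + (N - k2) * w"
proof -
  let ?f = "\<lambda>i. if i < k1 then u else if i < k2 then v else w"
  have "(\<Sum>i<N. ?f i) = sum ?f {0..<k1} + sum ?f {k1..<k2} + sum ?f {k2..<N}"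
    using assms by (simp add: lessThan_atLeast0 sum.atLeastLessThan_concat
        flip: sum.atLeastLessThan_concat[of 0 k1 k2] sum.atLeastLessThan_concat[of 0 k2 N])
  also have "\<dots> = k1 * u + (k2 - k1) * v + (N - k2) * w"
    using assms(1) by (simp add: sum.cong[of "{k2..<N}" _ ?f "\<lambda>_. w"])
  finally show ?thesis .
qed

lemma block_tuple_solution:
  assumes "k1 \<le> k2" "k2 \<le> m - 1"
    and "u \<in> {1..n}" "v \<in> {1..n}" "w \<in> {1..n}" "z \<in> {1..n}"
    and "k1 * u + (k2 - k1) * v + (m - 1 - k2) * w = a * z"
  shows "is_solution m a n (block_tuple m k1 k2 u v w z)"
proof -
  have "(\<Sum>i<m - 1. block_tuple m k1 k2 u v w z i)
          = (\<Sum>i<m - 1. if i < k1 then u else if i < k2 then v else w)"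
    unfolding block_tuple_def by (rule sum.cong) auto
  also have "\<dots> = a * z"
    using assms(1,2,7) by (simp add: sum_three_blocks)
  finally show ?thesis
    using assms(3-6) unfolding is_solution_def block_tuple_def by auto
qed

lemma block_tuple_not_monochromatic:
  assumes no_mono: "\<not> (\<exists>x. is_solution m a n x \<and> monochromatic col m x)"
    and "k1 \<le> k2" "k2 \<le> m - 1"
    and "u \<in> {1..n}" "v \<in> {1..n}" "w \<in> {1..n}" "z \<in> {1..n}"
    and "k1 * u + (k2 - k1) * v + (m - 1 - k2) * w = a * z"
  shows "\<not> (col u = col z \<and> col v = col z \<and> col w = col z)"
proof
  assume "col u = col z \<and> col v = col z \<and> col w = col z"
  then have "monochromatic col m (block_tuple m k1 k2 u v w z)"
    unfolding monochromatic_def block_tuple_def by auto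
  with block_tuple_solution[OF assms(2-8)] no_mono show False by blast
qed

lemma square_quotient_le_Cma: "((m - 1) div a)^2 \<le> Cma m a"
proof -
  define q where "q = (m - 1) div a"
  define x where "x = real (m - 1) / real a"
  have "real q \<le> x"
    unfolding q_def x_def by (rule of_nat_div_le_of_nat)
  then have "real q \<le> of_int (ceiling x)"
    by (meson le_of_int_ceiling order_trans)
  with \<open>real q \<le> x\<close> have "real q * real q \<le> x * of_int (ceiling x)"
    by (intro mult_mono) auto
  also have "\<dots> \<le> of_int (ceiling (x * of_int (ceiling x)))"
    by simp
  finally have "real_of_int (int (q * q)) \<le> real_of_int (ceiling (x * of_int (ceiling x)))"
    by simp
  then have "int (q * q) \<le> ceiling (x * of_int (ceiling x))"
    by (simp only: of_int_le_iff)
  moreover have "Cma m a = nat (ceiling (x * of_int (ceiling x)))"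
    unfolding Cma_def x_def by simp
  ultimately show ?thesis
    unfolding q_def[symmetric] power2_eq_square by (metis nat_int nat_mono)
qed

text \<open>Step (1): if \<open>a - 2\<close> and \<open>a - 1\<close> have colour \<open>col\<close>, then every \<open>y \<in> [n]\<close>
  with \<open>N(a-2) \<le> a y \<le> N(a-1)\<close>, \<open>N = m - 1\<close>, does not, because \<open>a y\<close> is
  then a sum of \<open>k = a y - N(a-2)\<close> copies of \<open>a - 1\<close> and \<open>N - k\<close> copies of \<open>a - 2\<close>.\<close>
lemma middle_range_opposite_colour:
  assumes no_mono: "\<not> (\<exists>x. is_solution m a n x \<and> monochromatic col m x)"
    and "a \<ge> 3" "a - 1 \<le> n" "col (a - 2)" "col (a - 1)"
    and y: "y \<in> {1..n}" "(m - 1) * (a - 2) \<le> a * y" "a * y \<le> (m - 1) * (a - 1)"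
  shows "\<not> col y"
proof -
  define N where "N = m - 1"
  define k where "k = a * y - N * (a - 2)"
  define d where "d = a - 2"
  have a1: "a - 1 = d + 1"
    using \<open>a \<ge> 3\<close> unfolding d_def by simp
  have "k \<le> N"
    using y unfolding k_def N_def a1 d_def[symmetric] by (simp add: algebra_simps)
  have "k * (a - 1) + (N - k) * (a - 2) = k + (k + (N - k)) * d"
    unfolding a1 d_def[symmetric] by (simp add: algebra_simps)
  also have "\<dots> = k + N * (a - 2)"
    using \<open>k \<le> N\<close> unfolding d_def by simp
  also have "\<dots> = a * y"
    using y unfolding k_def N_def by simp
  finally have sum: "k * (a - 1) + (N - k) * (a - 2) + (N - N) * (a - 2) = a * y"
    by simp
  have "a - 1 \<in> {1..n}" "a - 2 \<in> {1..n}"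
    using \<open>a \<ge> 3\<close> \<open>a - 1 \<le> n\<close> by auto
  from block_tuple_not_monochromatic[OF no_mono, of k N "a - 1" "a - 2" "a - 2" y]
  show ?thesis
    using \<open>k \<le> N\<close> sum y(1) \<open>a - 1 \<in> {1..n}\<close> \<open>a - 2 \<in> {1..n}\<close> assms(4,5)
    unfolding N_def by auto
qed

lemma two_gets_colour:
  assumes no_mono: "\<not> (\<exists>x. is_solution m a n x \<and> monochromatic col m x)"
    and "a \<ge> 4" and q: "a \<le> (m - 1) div a" "((m - 1) div a)^2 \<le> n"
    and "col (a - 2)" "col (a - 1)"
  shows "col 2"
proof (rule ccontr)
  assume "\<not> col 2"
  define q where "q = (m - 1) div a"
  define r where "r = (m - 1) mod a"
  obtain b where ab: "a = b + 4"
    using \<open>a \<ge> 4\<close> by (metis add.commute le_Suc_ex)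
  obtain c where qc: "q = b + 4 + c"
    using q(1) unfolding q_def ab by (metis le_Suc_ex)
  have N: "m - 1 = a * q + r" "r < a"
    unfolding q_def r_def using ab by simp_all
  (* h = q(a-1) + r - 1 and y = q(a-2) + r + a - 4, written without subtraction *)
  define h where "h = q * (b + 2) + b + 3 + c + r"
  define y where "y = q * (b + 2) + r + b"
  have "q * q \<le> n"
    using q(2) unfolding q_def by (simp add: power2_eq_square)
  moreover have "h < q * q" "y \<le> h" "1 \<le> y" "a - 1 \<le> h"
    unfolding h_def y_def using \<open>r < a\<close> unfolding ab qc by (simp_all add: algebra_simps)
  ultimately have range: "h \<in> {1..n}" "y \<in> {1..n}" "2 \<in> {1..n}" "a - 1 \<le> n"
    unfolding ab by auto
  have lower: "(m - 1) * (a - 2) = ((b + 4) * q + r) * (b + 2)"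
    and upper: "(m - 1) * (a - 1) = ((b + 4) * q + r) * (b + 3)"
    unfolding N(1) ab by simp_all
  have "(m - 1) * (a - 2) \<le> a * h" "a * h \<le> (m - 1) * (a - 1)"
    using \<open>r < a\<close> unfolding lower upper unfolding h_def ab qc by (simp_all add: algebra_simps)
  then have h_blue: "\<not> col h"
    using middle_range_opposite_colour[OF no_mono _ _ assms(5,6)] range \<open>a \<ge> 4\<close> by simp
  have "(m - 1) * (a - 2) \<le> a * y" "a * y \<le> (m - 1) * (a - 1)"
    using \<open>r < a\<close> unfolding lower upper unfolding y_def ab qc by (simp_all add: algebra_simps)
  then have y_blue: "\<not> col y"
    using middle_range_opposite_colour[OF no_mono _ _ assms(5,6)] range \<open>a \<ge> 4\<close> by simp
  have sum: "b * h + (a - 2 - b) * y + (m - 1 - (a - 2)) * 2 = a * h"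
    unfolding N(1) h_def y_def ab qc by (simp add: algebra_simps)
  have "a - 2 \<le> m - 1"
    unfolding N(1) ab qc by (simp add: algebra_simps)
  from block_tuple_not_monochromatic[OF no_mono, of b "a - 2" h y 2 h] show False
    using \<open>a - 2 \<le> m - 1\<close> sum range \<open>\<not> col 2\<close> h_blue y_blue unfolding N(1) ab by auto
qed

theorem lemma6:
  fixes m a :: nat and red :: "nat \<Rightarrow> bool"
  assumes "a \<ge> 3"
    and "m \<ge> 2 * a^2 - a + 2"
    and "\<not> (\<exists>x. is_solution m a (Cma m a) x \<and> monochromatic red m x)"
    and "red (a - 2)" and "red (a - 1)"
  shows "red 2"
proof (cases "a = 3")
  case True
  then show ?thesis using assms(5) by simp
next
  case False
  then have "a \<ge> 4" using assms(1) by simp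
  have "a \<le> a * a" by simp
  then have "a * a \<le> m - 1"
    using assms(2) by (simp add: power2_eq_square, linarith)
  then have "a \<le> (m - 1) div a"
    using \<open>a \<ge> 4\<close> by (simp add: less_eq_div_iff_mult_less_eq)
  from two_gets_colour[OF assms(3) \<open>a \<ge> 4\<close> this square_quotient_le_Cma assms(4,5)]
  show ?thesis .
qed

end
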